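(* Let $(N,v)$ be a balanced game. The set $\mathscr{E}(N,v)$ of effective coalitions equals the union of all minimal balanced collections $\mathscr{B}$ on $N$ such that $\sum_{S\in\mathscr{B}}\lambda^{\mathscr{B}}_S v(S)=v(N)$, where $\lambda^{\mathscr{B}}$ denotes the (unique) balancing weights of $\mathscr{B}$.
   Context: A game $(N,v)$: $N$ finite nonempty, $v:2^N\to\mathbb{R}$, $v(\varnothing)=0$; $x(S)=\sum_{i\in S}x_i$. Core: $C(N,v)=\{x\in\mathbb{R}^N\mid x(N)=v(N),\ x(S)\ge v(S)\ \forall S\subseteq N\}$; the game is balanced if $C(N,v)\ne\varnothing$. A coalition (nonempty $S\subseteq N$) is effective if $x(S)=v(S)$ for all $x\in C(N,v)$; $\mathscr{E}(N,v)$ is the set of effective coalitions. A collection $\mathscr{B}$ of nonempty subsets of $N$ is balanced if there exist positive weights $(\lambda_S)_{S\in\mathscr{B}}$ with $\sum_{S\in\mathscr{B}}\lambda_S\mathbf{1}^S=\mathbf{1}^N$ ($\mathbf{1}^S$ the characteristic vector); it is minimal if it contains no balanced proper subcollection, equivalently its balancing weights are unique. *)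

theory Defs
  imports Complex_Main
begin

text \<open>Cooperative TU games: player set N (finite, nonempty), characteristic
  function v on subsets, with v {} = 0. Payoff vectors are functions 'a => real;
  only their values on N matter.\<close>

definition game :: "'a set \<Rightarrow> ('a set \<Rightarrow> real) \<Rightarrow> bool" where
  "game N v \<longleftrightarrow> finite N \<and> N \<noteq> {} \<and> v {} = 0"

definition core :: "'a set \<Rightarrow> ('a set \<Rightarrow> real) \<Rightarrow> ('a \<Rightarrow> real) set" where
  "core N v = {x. sum x N = v N \<and> (\<forall>S. S \<subseteq> N \<longrightarrow> sum x S \<ge> v S)}"

definition balanced_game :: "'a set \<Rightarrow> ('a set \<Rightarrow> real) \<Rightarrow> bool" where
  "balanced_game N v \<longleftrightarrow> core N v \<noteq> {}"

definition effective_coalitions :: "'a set \<Rightarrow> ('a set \<Rightarrow> real) \<Rightarrow> 'a set set" where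
  "effective_coalitions N v =
     {S. S \<noteq> {} \<and> S \<subseteq> N \<and> (\<forall>x \<in> core N v. sum x S = v S)}"

text \<open>Balancing weights of a collection B of nonempty subsets of N: positive on B,
  (by convention) zero off B, and sum_{S in B} lambda_S 1^S = 1^N.\<close>

definition balancing_weights :: "'a set \<Rightarrow> 'a set set \<Rightarrow> ('a set \<Rightarrow> real) \<Rightarrow> bool" where
  "balancing_weights N B w \<longleftrightarrow>
     (\<forall>S\<in>B. w S > 0) \<and> (\<forall>S. S \<notin> B \<longrightarrow> w S = 0) \<and>
     (\<forall>i\<in>N. (\<Sum>S\<in>{S\<in>B. i \<in> S}. w S) = 1)"

definition balanced_collection :: "'a set \<Rightarrow> 'a set set \<Rightarrow> bool" where
  "balanced_collection N B \<longleftrightarrow>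
     (\<forall>S\<in>B. S \<noteq> {} \<and> S \<subseteq> N) \<and> (\<exists>w. balancing_weights N B w)"

definition minimal_balanced :: "'a set \<Rightarrow> 'a set set \<Rightarrow> bool" where
  "minimal_balanced N B \<longleftrightarrow>
     balanced_collection N B \<and> (\<forall>C. C \<subset> B \<longrightarrow> \<not> balanced_collection N C)"

text \<open>The (unique, for minimal B) balancing weights lambda^B.\<close>

definition bweights :: "'a set \<Rightarrow> 'a set set \<Rightarrow> 'a set \<Rightarrow> real" where
  "bweights N B = (THE w. balancing_weights N B w)"

end

theory Submission
  imports Defs
begin

text \<open>If B is minimal balanced and the sum of its weighted worths is v(N), then for
  every core allocation x the sum over S in B of the weight of S times (x(S) - v(S)) equals
  x(N) - v(N) = 0 and has nonnegative terms, so every member of B is effective.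

  Conversely, let S be effective and pick a core allocation x that is strict on all
  non-effective coalitions (an iterated midpoint of core points). No vector y with y(N) = 0 and
  y(T) \<ge> 0 for all effective T can have y(S) > 0, since x + e y would stay in the core for
  small e > 0. By Farkas' lemma the effective coalitions therefore carry nonnegative
  balancing weights that are positive on S. Shrinking the support of such weights, as
  long as it contains a balanced proper subcollection, ends in a minimal balanced
  collection B of effective coalitions containing S; on B every core allocation is tight,
  so the weighted sum of the worths is x(N) = v(N).\<close>

definition inner_on :: "'i set \<Rightarrow> ('i \<Rightarrow> real) \<Rightarrow> ('i \<Rightarrow> real) \<Rightarrow> real" where
  "inner_on N y f = (\<Sum>i\<in>N. y i * f i)"

definition cone_member :: "'i set \<Rightarrow> 'j set \<Rightarrow> ('j \<Rightarrow> 'i \<Rightarrow> real) \<Rightarrow> ('i \<Rightarrow> real) \<Rightarrow> bool" where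
  "cone_member N J a b \<longleftrightarrow> (\<exists>\<mu>. (\<forall>j\<in>J. 0 \<le> \<mu> j) \<and> (\<forall>i\<in>N. b i = (\<Sum>j\<in>J. \<mu> j * a j i)))"

definition separating_vector ::
    "'i set \<Rightarrow> 'j set \<Rightarrow> ('j \<Rightarrow> 'i \<Rightarrow> real) \<Rightarrow> ('i \<Rightarrow> real) \<Rightarrow> ('i \<Rightarrow> real) \<Rightarrow> bool" where
  "separating_vector N J a b y \<longleftrightarrow> (\<forall>j\<in>J. 0 \<le> inner_on N y (a j)) \<and> inner_on N y b < 0"

definition project_along :: "'i set \<Rightarrow> ('i \<Rightarrow> real) \<Rightarrow> ('i \<Rightarrow> real) \<Rightarrow> ('i \<Rightarrow> real) \<Rightarrow> 'i \<Rightarrow> real" where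
  "project_along N y g f = (\<lambda>i. f i - inner_on N y f / inner_on N y g * g i)"

lemma inner_on_diff_right: "inner_on N y (\<lambda>i. f i - r * g i) = inner_on N y f - r * inner_on N y g"
  by (simp add: inner_on_def algebra_simps sum_subtractf sum_distrib_left)

lemma inner_on_diff_left: "inner_on N (\<lambda>i. y i - r * z i) f = inner_on N y f - r * inner_on N z f"
  by (simp add: inner_on_def algebra_simps sum_subtractf sum_distrib_left)

lemma inner_on_project_along:
  "inner_on N y' (project_along N y g f) =
     inner_on N (\<lambda>i. y' i - inner_on N y' g / inner_on N y g * y i) f"
  unfolding project_along_def inner_on_diff_left inner_on_diff_right by simp

lemma project_along_self:
  assumes "inner_on N y g \<noteq> 0"
  shows "project_along N y g g = (\<lambda>i. 0)"
  using assms by (simp add: project_along_def)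

lemma cone_member_mono:
  assumes "cone_member N J a b" "J \<subseteq> J'" "finite J'"
  shows "cone_member N J' a b"
proof -
  obtain \<mu> where \<mu>: "\<forall>j\<in>J. 0 \<le> \<mu> j" "\<forall>i\<in>N. b i = (\<Sum>j\<in>J. \<mu> j * a j i)"
    using assms(1) by (auto simp: cone_member_def)
  let ?\<mu>' = "\<lambda>j. if j \<in> J then \<mu> j else 0"
  have "(\<Sum>j\<in>J'. ?\<mu>' j * a j i) = (\<Sum>j\<in>J. \<mu> j * a j i)" for i
    using assms(2,3) by (intro sum.mono_neutral_cong_right) auto
  then show ?thesis
    using \<mu> by (auto simp: cone_member_def intro!: exI[of _ ?\<mu>'])
qed

lemma cone_member_insert_of_projection:
  assumes J: "finite J" "k \<notin> J" and y: "separating_vector N J a b y"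
    and c: "inner_on N y (a k) < 0"
    and "cone_member N J (\<lambda>j. project_along N y (a k) (a j)) (project_along N y (a k) b)"
  shows "cone_member N (insert k J) a b"
proof -
  let ?c = "inner_on N y (a k)" and ?P = "project_along N y (a k)"
  obtain \<mu> where \<mu>: "\<forall>j\<in>J. 0 \<le> \<mu> j" "\<forall>i\<in>N. ?P b i = (\<Sum>j\<in>J. \<mu> j * ?P (a j) i)"
    using assms(5) by (auto simp: cone_member_def)
  define m where "m = (inner_on N y b - (\<Sum>j\<in>J. \<mu> j * inner_on N y (a j))) / ?c"
  have "0 \<le> (\<Sum>j\<in>J. \<mu> j * inner_on N y (a j))"
    using \<mu>(1) y by (intro sum_nonneg) (auto simp: separating_vector_def)
  then have "0 \<le> m"
    using y c by (auto simp: m_def separating_vector_def intro: divide_nonpos_neg)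
  moreover have "b i = (\<Sum>j\<in>J. \<mu> j * a j i) + m * a k i" if "i \<in> N" for i
  proof -
    have "(\<Sum>j\<in>J. \<mu> j * ?P (a j) i)
        = (\<Sum>j\<in>J. \<mu> j * a j i) - (\<Sum>j\<in>J. \<mu> j * inner_on N y (a j)) / ?c * a k i"
      by (simp add: project_along_def right_diff_distrib sum_subtractf sum_distrib_left
          sum_distrib_right sum_divide_distrib mult_ac)
    moreover have "b i = ?P b i + inner_on N y b / ?c * a k i"
      by (simp add: project_along_def)
    ultimately show ?thesis
      using \<mu>(2) that by (simp add: m_def diff_divide_distrib algebra_simps)
  qed
  ultimately show ?thesis
    using \<mu>(1) J unfolding cone_member_def
    by (intro exI[of _ "\<mu>(k := m)"]) (auto intro!: sum.cong)
qed

lemma separating_vector_insert_of_projection: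
  assumes "inner_on N y (a k) \<noteq> 0"
    and "separating_vector N J (\<lambda>j. project_along N y (a k) (a j)) (project_along N y (a k) b) y'"
  shows "separating_vector N (insert k J) a b
    (\<lambda>i. y' i - inner_on N y' (a k) / inner_on N y (a k) * y i)"
proof -
  let ?z = "\<lambda>i. y' i - inner_on N y' (a k) / inner_on N y (a k) * y i"
  have z: "inner_on N ?z f = inner_on N y' (project_along N y (a k) f)" for f
    by (simp add: inner_on_project_along)
  have "inner_on N y' (\<lambda>i. 0) = 0"
    by (simp add: inner_on_def)
  then show ?thesis
    using assms(2) project_along_self[OF assms(1)] unfolding separating_vector_def z by simp
qed

lemma farkas_lemma:
  fixes a :: "'j \<Rightarrow> 'i \<Rightarrow> real" and b :: "'i \<Rightarrow> real"
  assumes "finite N" "finite J"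
  shows "cone_member N J a b \<or> (\<exists>y. separating_vector N J a b y)"
  using assms(2)
proof (induction J arbitrary: a b rule: finite_induct)
  case empty
  show ?case
  proof (cases "\<forall>i\<in>N. b i = 0")
    case True
    then show ?thesis by (simp add: cone_member_def)
  next
    case False
    then obtain i0 where "i0 \<in> N" "b i0 \<noteq> 0" by auto
    then have "0 < inner_on N b b"
      using assms(1) unfolding inner_on_def
      by (intro sum_pos2[where i=i0]) (auto simp: zero_less_mult_iff)
    then have "separating_vector N {} a b (\<lambda>i. - b i)"
      by (simp add: separating_vector_def inner_on_def sum_negf)
    then show ?thesis by blast
  qed
next
  case (insert k J)
  consider "cone_member N J a b" | y where "separating_vector N J a b y"
    using insert.IH by blast
  then show ?case
  proof cases
    case 1
    then show ?thesis using insert.hyps(1) by (blast intro: cone_member_mono)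
  next
    case (2 y)
    show ?thesis
    proof (cases "0 \<le> inner_on N y (a k)")
      case True
      with 2 show ?thesis by (auto simp: separating_vector_def)
    next
      case False
      text \<open>Fourier--Motzkin elimination: project all vectors along a k onto the
        hyperplane orthogonal to y and apply the induction hypothesis to the projections.\<close>
      then show ?thesis
        using insert.IH[of "\<lambda>j. project_along N y (a k) (a j)" "project_along N y (a k) b"]
          cone_member_insert_of_projection[OF insert.hyps 2]
          separating_vector_insert_of_projection[of N y a k J b]
        by force
    qed
  qed
qed

definition nonneg_balancing_weights :: "'a set \<Rightarrow> 'a set set \<Rightarrow> ('a set \<Rightarrow> real) \<Rightarrow> bool" where
  "nonneg_balancing_weights N E w \<longleftrightarrow>
     (\<forall>T. 0 \<le> w T) \<and> (\<forall>T. T \<notin> E \<longrightarrow> w T = 0) \<and>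
     (\<forall>i\<in>N. (\<Sum>T\<in>{T\<in>E. i \<in> T}. w T) = 1)"

lemma balancing_weights_imp_nonneg:
  assumes "balancing_weights N B w"
  shows "nonneg_balancing_weights N B w"
  using assms unfolding balancing_weights_def nonneg_balancing_weights_def
  by (metis order_less_imp_le order_refl)

lemma nonneg_balancing_weights_support:
  assumes "nonneg_balancing_weights N E w"
  shows "{T. 0 < w T} \<subseteq> E"
  using assms by (force simp: nonneg_balancing_weights_def)

lemma balancing_weights_on_support:
  assumes w: "nonneg_balancing_weights N E w" and "finite E"
  shows "balancing_weights N {T. 0 < w T} w"
proof -
  have "(\<Sum>T\<in>{T\<in>{T. 0 < w T}. i \<in> T}. w T) = (\<Sum>T\<in>{T\<in>E. i \<in> T}. w T)" for i
    using w \<open>finite E\<close> nonneg_balancing_weights_support[OF w]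
    by (intro sum.mono_neutral_left) (auto simp: nonneg_balancing_weights_def order_le_less)
  then show ?thesis
    using w by (auto simp: balancing_weights_def nonneg_balancing_weights_def order_le_less)
qed

lemma sum_weighted_coalitions:
  fixes x :: "'a \<Rightarrow> real"
  assumes "finite N" "finite E" "\<forall>T\<in>E. T \<subseteq> N"
    and balance: "\<forall>i\<in>N. (\<Sum>T\<in>{T\<in>E. i \<in> T}. w T) = 1"
  shows "(\<Sum>T\<in>E. w T * sum x T) = sum x N"
proof -
  have "(\<Sum>T\<in>E. w T * sum x T) = (\<Sum>T\<in>E. \<Sum>i\<in>N. if i \<in> T then w T * x i else 0)"
    using assms(1,3) by (intro sum.cong) (auto simp: sum.If_cases sum_distrib_left Int_absorb1)
  also have "\<dots> = (\<Sum>i\<in>N. \<Sum>T\<in>{T\<in>E. i \<in> T}. w T * x i)"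
    using assms(2) by (subst sum.swap) (simp add: sum.inter_filter)
  also have "\<dots> = (\<Sum>i\<in>N. x i * (\<Sum>T\<in>{T\<in>E. i \<in> T}. w T))"
    by (simp add: sum_distrib_left mult.commute)
  also have "\<dots> = sum x N"
    using balance by simp
  finally show ?thesis .
qed

lemma exists_negative_in_zero_sum:
  fixes d :: "'b \<Rightarrow> real"
  assumes "finite A" "sum d A = 0" "T \<in> A" "d T \<noteq> 0"
  shows "\<exists>T'\<in>A. d T' < 0"
proof (rule ccontr)
  assume "\<not> ?thesis"
  then have "0 < sum d A"
    using assms by (intro sum_pos2[where i=T]) (auto simp: order_le_less)
  with assms(2) show False by simp
qed

lemma max_feasible_step:
  fixes w d :: "'b \<Rightarrow> real"
  assumes "finite D" "D \<noteq> {}" and D: "\<forall>T\<in>D. 0 \<le> w T \<and> d T < 0"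
  shows "\<exists>t\<ge>0. \<exists>T1\<in>D. w T1 + t * d T1 = 0 \<and> (\<forall>T\<in>D. 0 \<le> w T + t * d T)"
proof -
  define t where "t = Min ((\<lambda>T. w T / - d T) ` D)"
  have "t \<in> (\<lambda>T. w T / - d T) ` D"
    unfolding t_def using assms(1,2) by (intro Min_in) auto
  then obtain T1 where T1: "T1 \<in> D" "t = w T1 / - d T1"
    by blast
  have feasible: "0 \<le> w T + t * d T" if "T \<in> D" for T
  proof -
    have "t \<le> w T / - d T"
      using assms(1) that by (simp add: t_def)
    moreover have "0 < - d T"
      using D that by simp
    ultimately have "t * - d T \<le> w T"
      using pos_le_divide_eq by blast
    then show ?thesis by simp
  qed
  have "0 \<le> w T1" "d T1 < 0"
    using T1(1) D by auto
  then have "0 \<le> t" "w T1 + t * d T1 = 0"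
    using T1(2) by (simp_all add: divide_nonneg_neg)
  with T1(1) feasible show ?thesis
    by blast
qed

lemma nonneg_balancing_weights_shift:
  assumes w: "nonneg_balancing_weights N E w"
    and supp: "\<forall>T. w T = 0 \<longrightarrow> d T = 0"
    and d_sum: "\<forall>i\<in>N. (\<Sum>T\<in>{T\<in>E. i \<in> T}. d T) = 0"
    and nonneg: "\<forall>T. 0 \<le> w T + t * d T"
  shows "nonneg_balancing_weights N E (\<lambda>T. w T + t * d T)"
  using assms
  by (auto simp: nonneg_balancing_weights_def sum.distrib sum_distrib_left[symmetric])

text \<open>Move from w in the direction d until the first weight hits zero.\<close>

lemma shift_nonneg_balancing_weights:
  fixes d :: "'a set \<Rightarrow> real"
  assumes "finite E" and w: "nonneg_balancing_weights N E w"
    and supp: "\<forall>T. w T = 0 \<longrightarrow> d T = 0"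
    and d_sum: "\<forall>i\<in>N. (\<Sum>T\<in>{T\<in>E. i \<in> T}. d T) = 0"
    and "d T0 < 0"
  shows "\<exists>w'. nonneg_balancing_weights N E w' \<and> {T. 0 < w' T} \<subset> {T. 0 < w T} \<and>
    (\<forall>T. 0 \<le> d T \<longrightarrow> w T \<le> w' T)"
proof -
  have w_nonneg: "0 \<le> w T" for T
    using w by (simp add: nonneg_balancing_weights_def)
  define D where "D = {T. d T < 0}"
  have "D \<subseteq> {T. 0 < w T}"
    using supp w_nonneg by (force simp: D_def order_le_less)
  then have "finite D" "D \<noteq> {}"
    using nonneg_balancing_weights_support[OF w] \<open>finite E\<close> \<open>d T0 < 0\<close>
    by (auto simp: D_def intro: finite_subset)
  moreover have "\<forall>T\<in>D. 0 \<le> w T \<and> d T < 0"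
    using w_nonneg by (simp add: D_def)
  ultimately obtain t T1 where t: "0 \<le> t" "T1 \<in> D" "w T1 + t * d T1 = 0"
      "\<forall>T\<in>D. 0 \<le> w T + t * d T"
    using max_feasible_step[of D w d] by blast
  have nonneg: "0 \<le> w T + t * d T" for T
  proof (cases "T \<in> D")
    case False
    then have "0 \<le> t * d T"
      using t(1) by (simp add: D_def)
    then show ?thesis
      using w_nonneg[of T] by simp
  qed (use t(4) in simp)
  have "{T. 0 < w T + t * d T} \<subseteq> {T. 0 < w T}"
    using supp w_nonneg by (force simp: order_le_less)
  moreover have "T1 \<in> {T. 0 < w T} - {T. 0 < w T + t * d T}"
    using t \<open>D \<subseteq> {T. 0 < w T}\<close> by auto
  ultimately have "{T. 0 < w T + t * d T} \<subset> {T. 0 < w T}"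
    by blast
  moreover have "\<forall>T. 0 \<le> d T \<longrightarrow> w T \<le> w T + t * d T"
    using \<open>0 \<le> t\<close> by simp
  ultimately show ?thesis
    using nonneg_balancing_weights_shift[OF w supp d_sum] nonneg by blast
qed

lemma finite_family_of_subsets:
  assumes "finite N" "\<forall>T\<in>B. T \<subseteq> N"
  shows "finite B"
  using assms by (auto intro: finite_subset[of B "Pow N"])

lemma minimal_balanced_weights_unique:
  assumes N: "finite N" and B: "minimal_balanced N B"
    and w1: "balancing_weights N B w1" and w2: "balancing_weights N B w2"
  shows "w1 = w2"
proof (rule ccontr)
  assume "w1 \<noteq> w2"
  then obtain T where T: "w1 T \<noteq> w2 T"
    by (auto simp: fun_eq_iff)
  have B_sub: "\<forall>S\<in>B. S \<noteq> {} \<and> S \<subseteq> N"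
    using B by (simp add: minimal_balanced_def balanced_collection_def)
  have "finite B"
    using N B_sub by (simp add: finite_family_of_subsets)
  have pos: "\<forall>T\<in>B. 0 < w1 T" and zero: "\<forall>T. T \<notin> B \<longrightarrow> w1 T = 0 \<and> w2 T = 0"
    using w1 w2 by (simp_all add: balancing_weights_def)
  define d where "d T = w2 T - w1 T" for T
  have supp: "\<forall>T. w1 T = 0 \<longrightarrow> d T = 0"
  proof (intro allI impI)
    fix T assume "w1 T = 0"
    then have "T \<notin> B" using pos by force
    then show "d T = 0" using zero by (simp add: d_def)
  qed
  have d_sum: "\<forall>i\<in>N. (\<Sum>T\<in>{T\<in>B. i \<in> T}. d T) = 0"
    using w1 w2 by (simp add: balancing_weights_def d_def sum_subtractf)
  have "T \<in> B" "d T \<noteq> 0"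
    using T zero by (auto simp: d_def)
  then obtain i where "i \<in> T" "i \<in> N"
    using B_sub by blast
  then obtain T0 where "d T0 < 0"
    using exists_negative_in_zero_sum[of "{T\<in>B. i \<in> T}" d T] d_sum \<open>finite B\<close> \<open>T \<in> B\<close> \<open>d T \<noteq> 0\<close>
    by auto
  then obtain w' where w': "nonneg_balancing_weights N B w'" "{T. 0 < w' T} \<subset> {T. 0 < w1 T}"
    using shift_nonneg_balancing_weights[OF \<open>finite B\<close> balancing_weights_imp_nonneg[OF w1]
        supp d_sum]
    by blast
  have "{T. 0 < w1 T} = B"
    using pos zero by force
  moreover have "balanced_collection N {T. 0 < w' T}"
    using balancing_weights_on_support[OF w'(1) \<open>finite B\<close>]
      nonneg_balancing_weights_support[OF w'(1)]
      B_sub unfolding balanced_collection_def by blast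
  ultimately show False
    using B w'(2) unfolding minimal_balanced_def by blast
qed

lemma minimal_balanced_bweights:
  assumes "finite N" "minimal_balanced N B"
  shows "balancing_weights N B (bweights N B)"
proof -
  obtain w where w: "balancing_weights N B w"
    using assms(2) by (auto simp: minimal_balanced_def balanced_collection_def)
  have "bweights N B = w"
    unfolding bweights_def
    by (rule the_equality[where P = "balancing_weights N B", OF w])
      (rule minimal_balanced_weights_unique[OF assms _ w])
  with w show ?thesis by simp
qed

lemma smaller_support_weights:
  assumes "finite E" and E: "\<forall>T\<in>E. T \<noteq> {} \<and> T \<subseteq> N"
    and w: "nonneg_balancing_weights N E w" and "0 < w S"
    and C: "C \<subset> {T. 0 < w T}" "balancing_weights N C \<mu>"
  shows "\<exists>w'. nonneg_balancing_weights N E w' \<and> {T. 0 < w' T} \<subset> {T. 0 < w T} \<and> 0 < w' S"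
proof -
  have "C \<subseteq> E"
    using C(1) nonneg_balancing_weights_support[OF w] by blast
  have \<mu>_zero: "\<forall>T. T \<notin> C \<longrightarrow> \<mu> T = 0"
    using C(2) by (simp add: balancing_weights_def)
  obtain T0 where T0: "0 < w T0" "T0 \<notin> C"
    using C(1) by blast
  txt \<open>The sign s makes d S nonnegative, so shifting along d cannot decrease w S.\<close>
  define s :: real where "s = (if 0 \<le> \<mu> S - w S then 1 else -1)"
  define d where "d T = s * (\<mu> T - w T)" for T
  have "0 \<le> d S" "d T0 \<noteq> 0"
    using T0 \<mu>_zero by (auto simp: d_def s_def)
  have supp: "\<forall>T. w T = 0 \<longrightarrow> d T = 0"
  proof (intro allI impI)
    fix T assume "w T = 0"
    then have "T \<notin> C" using C(1) by force
    then show "d T = 0" using \<mu>_zero \<open>w T = 0\<close> by (simp add: d_def)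
  qed
  have "(\<Sum>T\<in>{T\<in>E. i \<in> T}. \<mu> T) = (\<Sum>T\<in>{T\<in>C. i \<in> T}. \<mu> T)" for i
    using \<open>finite E\<close> \<open>C \<subseteq> E\<close> \<mu>_zero by (intro sum.mono_neutral_right) auto
  then have d_sum: "\<forall>i\<in>N. (\<Sum>T\<in>{T\<in>E. i \<in> T}. d T) = 0"
    using w C(2)
    by (simp add: d_def sum_distrib_left[symmetric] sum_subtractf balancing_weights_def
        nonneg_balancing_weights_def)
  have "T0 \<in> E"
    using nonneg_balancing_weights_support[OF w] T0(1) by blast
  then obtain i where "i \<in> T0" "i \<in> N"
    using E by blast
  then obtain T1 where "d T1 < 0"
    using exists_negative_in_zero_sum[of "{T\<in>E. i \<in> T}" d T0] d_sum \<open>finite E\<close> \<open>T0 \<in> E\<close>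
      \<open>d T0 \<noteq> 0\<close> by auto
  then obtain w' where w': "nonneg_balancing_weights N E w'" "{T. 0 < w' T} \<subset> {T. 0 < w T}"
      "\<forall>T. 0 \<le> d T \<longrightarrow> w T \<le> w' T"
    using shift_nonneg_balancing_weights[OF \<open>finite E\<close> w supp d_sum] by blast
  moreover have "0 < w' S"
    using w'(3) \<open>0 \<le> d S\<close> \<open>0 < w S\<close> by force
  ultimately show ?thesis by blast
qed

lemma minimal_balanced_subcollection:
  assumes "finite N" and E: "\<forall>T\<in>E. T \<noteq> {} \<and> T \<subseteq> N"
    and "nonneg_balancing_weights N E w" "0 < w S"
  shows "\<exists>B. minimal_balanced N B \<and> S \<in> B \<and> B \<subseteq> E"
  using assms(3,4)
proof (induction "card {T. 0 < w T}" arbitrary: w rule: less_induct)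
  case less
  let ?B = "{T. 0 < w T}"
  have "finite E"
    using assms(1) E by (simp add: finite_family_of_subsets)
  have "?B \<subseteq> E"
    using nonneg_balancing_weights_support[OF less.prems(1)] .
  have "balanced_collection N ?B"
    using balancing_weights_on_support[OF less.prems(1) \<open>finite E\<close>] \<open>?B \<subseteq> E\<close> E
    by (auto simp: balanced_collection_def)
  show ?case
  proof (cases "minimal_balanced N ?B")
    case True
    then show ?thesis
      using less.prems(2) \<open>?B \<subseteq> E\<close> by blast
  next
    case False
    then obtain C \<mu> where "C \<subset> ?B" "balancing_weights N C \<mu>"
      using \<open>balanced_collection N ?B\<close> by (auto simp: minimal_balanced_def balanced_collection_def)
    then obtain w' where w': "nonneg_balancing_weights N E w'" "{T. 0 < w' T} \<subset> ?B" "0 < w' S"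
      using smaller_support_weights[OF \<open>finite E\<close> E less.prems] by blast
    have "card {T. 0 < w' T} < card ?B"
      using w'(2) \<open>?B \<subseteq> E\<close> \<open>finite E\<close> by (intro psubset_card_mono) (auto intro: finite_subset)
    then show ?thesis
      using less.hyps w'(1,3) by blast
  qed
qed

text \<open>The weights are the terms of the cover c 1^N = 1^S + (sum of mu T 1^T over T in E),
  divided by c.\<close>

lemma nonneg_balancing_weights_of_cover:
  fixes \<mu> :: "'a set \<Rightarrow> real"
  assumes "finite E" "S \<in> E" "S \<inter> N \<noteq> {}" and \<mu>: "\<forall>T\<in>E. 0 \<le> \<mu> T"
    and cover: "\<forall>i\<in>N. c = of_bool (i \<in> S) + (\<Sum>T\<in>{T\<in>E. i \<in> T}. \<mu> T)"
  shows "\<exists>w. nonneg_balancing_weights N E w \<and> 0 < w S"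
proof -
  obtain i0 where "i0 \<in> S" "i0 \<in> N"
    using assms(3) by blast
  moreover have "0 \<le> (\<Sum>T\<in>{T\<in>E. i0 \<in> T}. \<mu> T)"
    using \<mu> by (intro sum_nonneg) auto
  ultimately have "1 \<le> c"
    using cover by simp
  define w where "w T = (if T \<in> E then (\<mu> T + of_bool (T = S)) / c else 0)" for T
  have "(\<Sum>T\<in>{T\<in>E. i \<in> T}. w T) = 1" if "i \<in> N" for i
  proof -
    have "(\<Sum>T\<in>{T\<in>E. i \<in> T}. w T)
        = ((\<Sum>T\<in>{T\<in>E. i \<in> T}. \<mu> T) + (\<Sum>T\<in>{T\<in>E. i \<in> T}. of_bool (T = S))) / c"
      by (simp add: w_def sum.distrib[symmetric] sum_divide_distrib[symmetric])
    also have "(\<Sum>T\<in>{T\<in>E. i \<in> T}. of_bool (T = S)) = (of_bool (i \<in> S) :: real)"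
      using assms(1,2) by (simp add: of_bool_def)
    finally show ?thesis
      using cover that \<open>1 \<le> c\<close> by simp
  qed
  then have "nonneg_balancing_weights N E w"
    using \<mu> \<open>1 \<le> c\<close> by (simp add: nonneg_balancing_weights_def w_def)
  moreover have "0 < w S"
    using \<mu> assms(2) \<open>1 \<le> c\<close> by (simp add: w_def add_nonneg_pos)
  ultimately show ?thesis by blast
qed

lemma balancing_weight_or_separating_vector:
  assumes "finite N" and E: "\<forall>T\<in>E. T \<subseteq> N" and "S \<in> E" "S \<noteq> {}"
  shows "(\<exists>w. nonneg_balancing_weights N E w \<and> 0 < w S) \<or>
    (\<exists>y :: 'a \<Rightarrow> real. (\<forall>T\<in>E. 0 \<le> sum y T) \<and> sum y N \<le> 0 \<and> 0 < sum y S)"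
proof -
  have "finite E"
    using assms(1) E by (rule finite_family_of_subsets)
  txt \<open>Farkas' lemma with the generators -1^N (index None) and 1^T (index Some T)
    and the target vector -1^S.\<close>
  let ?J = "insert None (Some ` E)"
  define a :: "'a set option \<Rightarrow> 'a \<Rightarrow> real" where
    "a j i = (case j of None \<Rightarrow> -1 | Some T \<Rightarrow> of_bool (i \<in> T))" for j i
  define b :: "'a \<Rightarrow> real" where "b i = - of_bool (i \<in> S)" for i
  have sum_J: "(\<Sum>j\<in>?J. f j) = f None + (\<Sum>T\<in>E. f (Some T))" for f :: "_ \<Rightarrow> real"
    using \<open>finite E\<close> by (simp add: sum.reindex)
  consider "cone_member N ?J a b" | y where "separating_vector N ?J a b y"
    using farkas_lemma[OF \<open>finite N\<close>, of ?J a b] \<open>finite E\<close> by blast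
  then show ?thesis
  proof cases
    case 1
    then obtain \<mu> where \<mu>: "\<forall>j\<in>?J. 0 \<le> \<mu> j" "\<forall>i\<in>N. b i = (\<Sum>j\<in>?J. \<mu> j * a j i)"
      by (auto simp: cone_member_def)
    have "\<forall>i\<in>N. \<mu> None = of_bool (i \<in> S) + (\<Sum>T\<in>{T\<in>E. i \<in> T}. \<mu> (Some T))"
    proof
      fix i assume "i \<in> N"
      have "- of_bool (i \<in> S) = (\<Sum>T\<in>{T\<in>E. i \<in> T}. \<mu> (Some T)) - \<mu> None"
        using \<mu>(2) \<open>i \<in> N\<close> \<open>finite E\<close> by (simp add: sum_J a_def b_def Int_def)
      then show "\<mu> None = of_bool (i \<in> S) + (\<Sum>T\<in>{T\<in>E. i \<in> T}. \<mu> (Some T))"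
        by linarith
    qed
    moreover have "S \<inter> N \<noteq> {}" "\<forall>T\<in>E. 0 \<le> \<mu> (Some T)"
      using \<mu>(1) E \<open>S \<in> E\<close> \<open>S \<noteq> {}\<close> by auto
    ultimately show ?thesis
      using nonneg_balancing_weights_of_cover[OF \<open>finite E\<close> \<open>S \<in> E\<close>,
          where \<mu> = "\<lambda>T. \<mu> (Some T)" and c = "\<mu> None"]
      by blast
  next
    case (2 y)
    have ind: "(\<Sum>i\<in>N. y i * of_bool (i \<in> T)) = sum y T" if "T \<subseteq> N" for T
      using \<open>finite N\<close> that by (simp add: Int_absorb1)
    have "\<forall>T\<in>E. 0 \<le> sum y T" "sum y N \<le> 0" "0 < sum y S"
      using 2 E \<open>S \<in> E\<close>
      by (auto simp: separating_vector_def inner_on_def sum_J a_def b_def ind sum_negf)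
    then show ?thesis by blast
  qed
qed

lemma core_midpoint:
  assumes "x \<in> core N v" "y \<in> core N v"
  shows "(\<lambda>i. (x i + y i) / 2) \<in> core N v"
proof -
  have "v S \<le> (sum x S + sum y S) / 2" if "S \<subseteq> N" for S
  proof -
    have "v S \<le> sum x S" "v S \<le> sum y S"
      using assms that by (simp_all add: core_def)
    then show ?thesis by (simp add: field_simps)
  qed
  then show ?thesis
    using assms by (simp add: core_def sum.distrib sum_divide_distrib[symmetric])
qed

lemma core_point_strict_on_finite:
  assumes "finite A" "core N v \<noteq> {}"
    and "\<forall>T\<in>A. T \<subseteq> N \<and> (\<exists>x\<in>core N v. sum x T \<noteq> v T)"
  shows "\<exists>x\<in>core N v. \<forall>T\<in>A. v T < sum x T"
  using assms(1,3)
proof (induction A rule: finite_induct)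
  case empty
  then show ?case using assms(2) by blast
next
  case (insert T A)
  have T: "T \<subseteq> N" "\<exists>x\<in>core N v. sum x T \<noteq> v T"
    and A: "\<forall>T\<in>A. T \<subseteq> N \<and> (\<exists>x\<in>core N v. sum x T \<noteq> v T)"
    using insert.prems by simp_all
  obtain x where x: "x \<in> core N v" "\<forall>T\<in>A. v T < sum x T"
    using insert.IH[OF A] by blast
  obtain y where y: "y \<in> core N v" "sum y T \<noteq> v T"
    using T(2) by blast
  have x_le: "v T' \<le> sum x T'" and y_le: "v T' \<le> sum y T'" if "T' \<in> insert T A" for T'
    using x(1) y(1) that T(1) A by (auto simp: core_def)
  have mid_sum: "sum (\<lambda>i. (x i + y i) / 2) T' = (sum x T' + sum y T') / 2" for T'
    by (simp add: sum.distrib sum_divide_distrib[symmetric])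
  have strict: "v T' < (sum x T' + sum y T') / 2" if "T' \<in> insert T A" for T'
  proof (cases "T' = T")
    case True
    then have "v T' < sum y T'"
      using y(2) y_le[OF that] by simp
    with x_le[OF that] show ?thesis by (simp add: field_simps)
  next
    case False
    then have "v T' < sum x T'"
      using x(2) that by simp
    with y_le[OF that] show ?thesis by (simp add: field_simps)
  qed
  show ?case
    using core_midpoint[OF x(1) y(1)] strict[folded mid_sum] by blast
qed

lemma core_relative_interior_point:
  assumes "game N v" "balanced_game N v"
  shows "\<exists>x\<in>core N v. \<forall>T. T \<subseteq> N \<and> T \<noteq> {} \<and> T \<notin> effective_coalitions N v \<longrightarrow> v T < sum x T"
proof -
  let ?A = "{T. T \<subseteq> N \<and> T \<noteq> {} \<and> T \<notin> effective_coalitions N v}"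
  have "finite ?A"
    using assms(1) by (simp add: game_def)
  moreover have "\<forall>T\<in>?A. T \<subseteq> N \<and> (\<exists>x\<in>core N v. sum x T \<noteq> v T)"
    by (auto simp: effective_coalitions_def)
  moreover have "core N v \<noteq> {}"
    using assms(2) by (simp add: balanced_game_def)
  ultimately show ?thesis
    using core_point_strict_on_finite[of ?A N v] by blast
qed

lemma core_perturbation:
  fixes y :: "'a \<Rightarrow> real"
  assumes "finite N" "v {} = 0" and x: "x \<in> core N v"
    and strict: "\<forall>T. T \<subseteq> N \<and> T \<noteq> {} \<and> T \<notin> E \<longrightarrow> v T < sum x T"
    and "sum y N = 0" and y_nonneg: "\<forall>T\<in>E. 0 \<le> sum y T"
  shows "\<exists>e>0. (\<lambda>i. x i + e * y i) \<in> core N v"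
proof -
  have sum_shift: "sum (\<lambda>i. x i + e * y i) T = sum x T + e * sum y T" for e T
    by (simp add: sum.distrib sum_distrib_left)
  have "\<forall>\<^sub>F e in at_right 0. v T \<le> sum x T + e * sum y T" if "T \<subseteq> N" for T
  proof (cases "T = {} \<or> T \<in> E")
    case True
    have "v T \<le> sum x T + e * sum y T" if "0 < e" for e
    proof -
      have "v T \<le> sum x T"
        using x \<open>T \<subseteq> N\<close> by (simp add: core_def)
      moreover have "0 \<le> e * sum y T"
        using True y_nonneg \<open>0 < e\<close> by auto
      ultimately show ?thesis by linarith
    qed
    with eventually_at_right_less[of "0 :: real"] show ?thesis
      by (rule eventually_mono)
  next
    case False
    have "((\<lambda>e. sum x T + e * sum y T) \<longlongrightarrow> sum x T) (at_right 0)"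
      by (auto intro!: tendsto_eq_intros)
    moreover have "v T < sum x T"
      using strict that False by blast
    ultimately have "\<forall>\<^sub>F e in at_right 0. v T < sum x T + e * sum y T"
      by (rule order_tendstoD(1))
    then show ?thesis
      by (rule eventually_mono) simp
  qed
  then have "\<forall>\<^sub>F e in at_right 0. \<forall>T\<in>Pow N. v T \<le> sum x T + e * sum y T"
    using \<open>finite N\<close> by (intro eventually_ball_finite) auto
  then have "\<forall>\<^sub>F e in at_right 0. 0 < e \<and> (\<forall>T\<in>Pow N. v T \<le> sum x T + e * sum y T)"
    by (rule eventually_conj[OF eventually_at_right_less])
  then obtain e where "0 < e" "\<forall>T\<in>Pow N. v T \<le> sum x T + e * sum y T"
    using eventually_happens'[OF trivial_limit_at_right_real] by blast
  then show ?thesis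
    using x \<open>sum y N = 0\<close> by (intro exI[of _ e]) (simp add: core_def sum_shift)
qed

lemma effective_coalitions_subsets:
  "\<forall>T\<in>effective_coalitions N v. T \<noteq> {} \<and> T \<subseteq> N"
  by (simp add: effective_coalitions_def)

lemma effective_coalition_positive_weight:
  assumes game: "game N v" and balanced: "balanced_game N v"
    and S: "S \<in> effective_coalitions N v"
  shows "\<exists>w. nonneg_balancing_weights N (effective_coalitions N v) w \<and> 0 < w S"
proof -
  let ?E = "effective_coalitions N v"
  have "finite N" "N \<noteq> {}" "v {} = 0"
    using game by (simp_all add: game_def)
  have "N \<in> ?E"
    using \<open>N \<noteq> {}\<close> by (simp add: effective_coalitions_def core_def)
  have "\<not> (\<exists>y :: 'a \<Rightarrow> real. (\<forall>T\<in>?E. 0 \<le> sum y T) \<and> sum y N \<le> 0 \<and> 0 < sum y S)"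
  proof
    assume "\<exists>y :: 'a \<Rightarrow> real. (\<forall>T\<in>?E. 0 \<le> sum y T) \<and> sum y N \<le> 0 \<and> 0 < sum y S"
    then obtain y :: "'a \<Rightarrow> real" where y: "\<forall>T\<in>?E. 0 \<le> sum y T" "sum y N \<le> 0" "0 < sum y S"
      by blast
    have "sum y N = 0"
      using y(1,2) \<open>N \<in> ?E\<close> by force
    obtain x where x: "x \<in> core N v" "\<forall>T. T \<subseteq> N \<and> T \<noteq> {} \<and> T \<notin> ?E \<longrightarrow> v T < sum x T"
      using core_relative_interior_point[OF game balanced] by blast
    obtain e where "0 < e" "(\<lambda>i. x i + e * y i) \<in> core N v"
      using core_perturbation[OF \<open>finite N\<close> \<open>v {} = 0\<close> x \<open>sum y N = 0\<close> y(1)] by blast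
    then have "sum (\<lambda>i. x i + e * y i) S = sum x S"
      using S \<open>x \<in> core N v\<close> by (simp add: effective_coalitions_def)
    then have "e * sum y S = 0"
      by (simp add: sum.distrib sum_distrib_left)
    with \<open>0 < e\<close> \<open>0 < sum y S\<close> show False
      by simp
  qed
  moreover have "\<forall>T\<in>?E. T \<subseteq> N" "S \<noteq> {}"
    using effective_coalitions_subsets[of N v] S by auto
  ultimately show ?thesis
    using balancing_weight_or_separating_vector[of N ?E S] \<open>finite N\<close> S by blast
qed

lemma balancing_weighted_value_eq:
  fixes x :: "'a \<Rightarrow> real"
  assumes "finite N" "balancing_weights N B w" "\<forall>T\<in>B. T \<subseteq> N"
  shows "(\<Sum>T\<in>B. w T * sum x T) = sum x N"
  using assms finite_family_of_subsets[OF assms(1,3)]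
  by (intro sum_weighted_coalitions) (auto simp: balancing_weights_def)

lemma balancing_weighted_value_of_effective:
  assumes "finite N" "balanced_game N v" "B \<subseteq> effective_coalitions N v" "balancing_weights N B w"
  shows "(\<Sum>T\<in>B. w T * v T) = v N"
proof -
  obtain x where x: "x \<in> core N v"
    using assms(2) by (auto simp: balanced_game_def)
  have "(\<Sum>T\<in>B. w T * v T) = (\<Sum>T\<in>B. w T * sum x T)"
    using assms(3) x by (intro sum.cong) (auto simp: effective_coalitions_def)
  also have "\<dots> = sum x N"
    using assms(3) effective_coalitions_subsets[of N v]
    by (intro balancing_weighted_value_eq[OF assms(1,4)]) blast
  also have "\<dots> = v N"
    using x by (simp add: core_def)
  finally show ?thesis .
qed

lemma tight_balanced_collection_effective:
  assumes "finite N" and B: "\<forall>T\<in>B. T \<noteq> {} \<and> T \<subseteq> N" and w: "balancing_weights N B w"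
    and tight: "(\<Sum>T\<in>B. w T * v T) = v N" and "S \<in> B"
  shows "S \<in> effective_coalitions N v"
proof -
  have "finite B"
    using assms(1) B by (simp add: finite_family_of_subsets)
  have "sum x S = v S" if x: "x \<in> core N v" for x
  proof -
    have "(\<Sum>T\<in>B. w T * (sum x T - v T)) = sum x N - v N"
      using balancing_weighted_value_eq[OF \<open>finite N\<close> w] B tight
      by (simp add: right_diff_distrib sum_subtractf)
    also have "\<dots> = 0"
      using x by (simp add: core_def)
    finally have "(\<Sum>T\<in>B. w T * (sum x T - v T)) = 0" .
    moreover have "0 \<le> w T * (sum x T - v T)" if "T \<in> B" for T
    proof -
      have "0 < w T"
        using w that by (simp add: balancing_weights_def)
      moreover have "v T \<le> sum x T"
        using x B that by (simp add: core_def)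
      ultimately show ?thesis by simp
    qed
    ultimately have "w S * (sum x S - v S) = 0"
      using sum_nonneg_eq_0_iff[OF \<open>finite B\<close>, of "\<lambda>T. w T * (sum x T - v T)"] \<open>S \<in> B\<close>
      by blast
    moreover have "0 < w S"
      using w \<open>S \<in> B\<close> by (simp add: balancing_weights_def)
    ultimately show ?thesis by simp
  qed
  then show ?thesis
    using B \<open>S \<in> B\<close> by (simp add: effective_coalitions_def)
qed

theorem lemma5p3:
  fixes N :: "'a set" and v :: "'a set \<Rightarrow> real"
  assumes "game N v" and "balanced_game N v"
  shows "effective_coalitions N v =
           \<Union> {B. minimal_balanced N B \<and> (\<Sum>S\<in>B. bweights N B S * v S) = v N}"
proof -
  have "finite N"
    using assms(1) by (simp add: game_def)
  show ?thesis
  proof (intro equalityI subsetI)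
    fix S assume "S \<in> effective_coalitions N v"
    then obtain w where "nonneg_balancing_weights N (effective_coalitions N v) w" "0 < w S"
      using effective_coalition_positive_weight[OF assms] by blast
    then obtain B where B: "minimal_balanced N B" "S \<in> B" "B \<subseteq> effective_coalitions N v"
      using minimal_balanced_subcollection[OF \<open>finite N\<close> effective_coalitions_subsets] by blast
    moreover have "(\<Sum>T\<in>B. bweights N B T * v T) = v N"
      using balancing_weighted_value_of_effective[OF \<open>finite N\<close> assms(2) B(3)]
        minimal_balanced_bweights[OF \<open>finite N\<close> B(1)] by blast
    ultimately show "S \<in> \<Union> {B. minimal_balanced N B \<and> (\<Sum>S\<in>B. bweights N B S * v S) = v N}"
      by blast
  next
    fix S assume "S \<in> \<Union> {B. minimal_balanced N B \<and> (\<Sum>S\<in>B. bweights N B S * v S) = v N}"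
    then obtain B where B: "minimal_balanced N B" "(\<Sum>T\<in>B. bweights N B T * v T) = v N" "S \<in> B"
      by blast
    moreover have "\<forall>T\<in>B. T \<noteq> {} \<and> T \<subseteq> N"
      using B(1) by (simp add: minimal_balanced_def balanced_collection_def)
    ultimately show "S \<in> effective_coalitions N v"
      using tight_balanced_collection_effective[OF \<open>finite N\<close>]
        minimal_balanced_bweights[OF \<open>finite N\<close>]
      by blast
  qed
qed

end
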